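(* Every equal-neighbor matrix $P\in\mathbb{R}^{n\times n}$ satisfies, for all $k\in\mathbb{N}$, $$\Big\|\tfrac1nP^k\Big\|_1\le 2\,\Big\|\tfrac1nP\Big\|_1^{1/2}.$$
   Context: An $n\times n$ matrix $P$ is equal-neighbor if $P=\mathrm{diag}(W\mathbf{1}_n)^{-1}W$ for some symmetric matrix $W\in\{0,1\}^{n\times n}$ with at least one nonzero entry in each row (diagonal entries allowed). For a nonnegative matrix $A$, $\|A\|_1=\max_j\sum_iA_{ij}$ (maximum column sum). *)

theory Defs
  imports "HOL-Analysis.Analysis"
begin

primrec matpow :: "real^'n^'n \<Rightarrow> nat \<Rightarrow> real^'n^'n" where
  "matpow A 0 = mat 1"
| "matpow A (Suc k) = A ** matpow A k"

definition diag_mat :: "real^'n \<Rightarrow> real^'n^'n" where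
  "diag_mat d = (\<chi> i j. if i = j then d $ i else 0)"

definition norm1 :: "real^'n^'m \<Rightarrow> real" where
  "norm1 A = Max (range (\<lambda>j. \<Sum>i\<in>UNIV. \<bar>A $ i $ j\<bar>))"

definition equal_neighbor :: "real^'n^'n \<Rightarrow> bool" where
  "equal_neighbor P \<longleftrightarrow> (\<exists>W :: real^'n^'n.
      (\<forall>i j. W $ i $ j \<in> {0, 1}) \<and> transpose W = W \<and>
      (\<forall>i. \<exists>j. W $ i $ j \<noteq> 0) \<and>
      P = matrix_inv (diag_mat (W *v (\<chi> i. 1))) ** W)"

end

theory Submission
  imports Defs
begin

text \<open>
  Write \<open>P = D\<^sup>-\<^sup>1 W\<close> with degrees \<open>d\<close> and let \<open>c\<^sub>k\<close> be the column sums of \<open>P\<^sup>k\<close>.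
  By Cauchy--Schwarz the energy \<open>\<Sum>\<^sub>j c\<^sub>k(j)\<^sup>2 / d(j)\<close> does not increase along
  \<open>k\<close>, so it stays below \<open>n\<close>. Another Cauchy--Schwarz step, weighted by the
  \<open>j\<close>-th column of \<open>P\<close>, gives \<open>c\<^sub>k\<^sub>+\<^sub>1(j)\<^sup>2 \<le> n c\<^sub>1(j)\<close>, i.e.
  \<open>\<parallel>P\<^sup>k\<parallel>\<^sub>1 \<le> (n \<parallel>P\<parallel>\<^sub>1)\<^sup>1\<^sup>/\<^sup>2\<close>, which is the claim with constant 1 after scaling by \<open>1/n\<close>.
\<close>

lemma weighted_Cauchy_Schwarz_sum:
  fixes w f :: "'a \<Rightarrow> real"
  assumes "\<And>x. x \<in> A \<Longrightarrow> w x \<ge> 0"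
  shows "(\<Sum>x\<in>A. w x * f x)\<^sup>2 \<le> (\<Sum>x\<in>A. w x) * (\<Sum>x\<in>A. w x * (f x)\<^sup>2)"
proof -
  have "(\<Sum>x\<in>A. w x * f x)\<^sup>2 = (\<Sum>x\<in>A. sqrt (w x) * (sqrt (w x) * f x))\<^sup>2"
    using assms by (simp add: mult.assoc[symmetric])
  also have "\<dots> \<le> (\<Sum>x\<in>A. (sqrt (w x))\<^sup>2) * (\<Sum>x\<in>A. (sqrt (w x) * f x)\<^sup>2)"
    by (rule Cauchy_Schwarz_ineq_sum)
  also have "\<dots> = (\<Sum>x\<in>A. w x) * (\<Sum>x\<in>A. w x * (f x)\<^sup>2)"
    using assms by (simp add: power_mult_distrib)
  finally show ?thesis .
qed

lemma matrix_inv_eqI: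
  fixes A B :: "'a::semiring_1^'n^'n"
  assumes "A ** B = mat 1" and "B ** A = mat 1"
  shows "matrix_inv A = B"
proof -
  have "B' = B" if "A ** B' = mat 1" for B'
  proof -
    have "B' = (B ** A) ** B'" using assms(2) by simp
    also have "\<dots> = B ** (A ** B')" by (rule matrix_mul_assoc[symmetric])
    also have "\<dots> = B" using that by simp
    finally show ?thesis .
  qed
  then show ?thesis
    unfolding matrix_inv_def using assms by (intro some_equality) blast+
qed

lemma diag_mat_matrix_mult: "(diag_mat a ** B) $ i $ j = a $ i * B $ i $ j"
proof -
  have "(diag_mat a ** B) $ i $ j = (\<Sum>l\<in>UNIV. (if i = l then a $ i else 0) * B $ l $ j)"
    by (simp add: matrix_matrix_mult_def diag_mat_def)
  also have "\<dots> = (\<Sum>l\<in>UNIV. if l = i then a $ i * B $ i $ j else 0)"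
    by (rule sum.cong) auto
  finally show ?thesis by simp
qed

lemma matrix_inv_diag_mat:
  assumes "\<And>i. a $ i \<noteq> 0"
  shows "matrix_inv (diag_mat a) = diag_mat (\<chi> i. inverse (a $ i))"
  by (rule matrix_inv_eqI; simp add: vec_eq_iff diag_mat_matrix_mult; simp add: diag_mat_def mat_def assms)

lemma matpow_Suc_right: "matpow A (Suc k) = matpow A k ** A"
  by (induction k) (simp_all add: matrix_mul_assoc)

lemma matpow_nonneg:
  assumes "\<And>i j. A $ i $ j \<ge> 0"
  shows "matpow A k $ i $ j \<ge> 0"
  by (induction k arbitrary: i j)
    (simp_all add: mat_def matrix_matrix_mult_def assms sum_nonneg)

definition col_sum :: "real^'n^'m \<Rightarrow> 'n \<Rightarrow> real" where
  "col_sum A j = (\<Sum>i\<in>UNIV. A $ i $ j)"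

lemma col_sum_mat_1: "col_sum (mat 1 :: real^'n^'n) j = 1"
  by (simp add: col_sum_def mat_def)

lemma col_sum_matrix_mult: "col_sum (A ** B) j = (\<Sum>l\<in>UNIV. col_sum A l * B $ l $ j)"
proof -
  have "col_sum (A ** B) j = (\<Sum>i\<in>UNIV. \<Sum>l\<in>UNIV. A $ i $ l * B $ l $ j)"
    by (simp add: col_sum_def matrix_matrix_mult_def)
  also have "\<dots> = (\<Sum>l\<in>UNIV. \<Sum>i\<in>UNIV. A $ i $ l * B $ l $ j)"
    by (rule sum.swap)
  finally show ?thesis
    by (simp add: col_sum_def sum_distrib_right)
qed

lemma norm1_scaleR: "norm1 (c *\<^sub>R A) = \<bar>c\<bar> * norm1 A"
proof -
  have "mono (\<lambda>x. \<bar>c\<bar> * x)" by (simp add: mono_def mult_left_mono)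
  then show ?thesis
    unfolding norm1_def by (subst mono_Max_commute) (auto simp: abs_mult sum_distrib_left image_image)
qed

lemma norm1_nonneg: "norm1 A \<ge> 0"
proof -
  have "0 \<le> (\<Sum>i\<in>UNIV. \<bar>A $ i $ j\<bar>)" for j
    by (simp add: sum_nonneg)
  also have "(\<Sum>i\<in>UNIV. \<bar>A $ i $ j\<bar>) \<le> norm1 A" for j
    unfolding norm1_def by (rule Max_ge) auto
  finally show ?thesis .
qed

lemma norm1_le_of_col_sum_le:
  fixes A :: "real^'n^'m"
  assumes "\<And>i j. A $ i $ j \<ge> 0" and "\<And>j. col_sum A j \<le> b"
  shows "norm1 A \<le> b"
  using assms unfolding norm1_def col_sum_def by (subst Max_le_iff) auto

lemma col_sum_le_norm1:
  fixes A :: "real^'n^'m"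
  assumes "\<And>i j. A $ i $ j \<ge> 0"
  shows "col_sum A j \<le> norm1 A"
  using assms unfolding norm1_def col_sum_def by (intro Max_ge) auto

locale adjacency_matrix =
  fixes W :: "real^'n^'n"
  assumes zero_one: "W $ i $ j \<in> {0, 1}"
    and symmetric: "W $ i $ j = W $ j $ i"
    and no_isolated: "\<exists>j. W $ i $ j \<noteq> 0"
begin

definition degree :: "'n \<Rightarrow> real" where
  "degree i = (\<Sum>j\<in>UNIV. W $ i $ j)"

definition walk :: "real^'n^'n" where
  "walk = (\<chi> i j. W $ i $ j / degree i)"

definition energy :: "('n \<Rightarrow> real) \<Rightarrow> real" where
  "energy s = (\<Sum>l\<in>UNIV. (s l)\<^sup>2 / degree l)"

lemma nonneg: "W $ i $ j \<ge> 0"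
  using zero_one[of i j] by auto

lemma le_one: "W $ i $ j \<le> 1"
  using zero_one[of i j] by auto

lemma column_sum_eq_degree: "(\<Sum>l\<in>UNIV. W $ l $ j) = degree j"
  unfolding degree_def by (simp add: symmetric[of _ j])

lemma degree_ge_1: "degree i \<ge> 1"
proof -
  obtain j where "W $ i $ j \<noteq> 0" using no_isolated by blast
  then have "W $ i $ j = 1" using zero_one[of i j] by auto
  moreover have "W $ i $ j \<le> degree i"
    unfolding degree_def by (rule member_le_sum) (simp_all add: nonneg)
  ultimately show ?thesis by simp
qed

lemma degree_pos: "degree i > 0"
  using degree_ge_1[of i] by simp

lemma degree_le_card: "degree i \<le> CARD('n)"
proof -
  have "degree i \<le> (\<Sum>j\<in>(UNIV::'n set). 1)"
    unfolding degree_def by (rule sum_mono) (rule le_one)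
  then show ?thesis by simp
qed

lemma walk_nonneg: "walk $ i $ j \<ge> 0"
  by (simp add: walk_def nonneg degree_pos less_imp_le)

lemma diag_degree_inv_mult_eq_walk: "matrix_inv (diag_mat (W *v (\<chi> i. 1))) ** W = walk"
proof -
  have "W *v (\<chi> i. 1) = (\<chi> i. degree i)"
    by (simp add: vec_eq_iff matrix_vector_mult_def degree_def)
  then show ?thesis
    using degree_pos
    by (simp add: matrix_inv_diag_mat vec_eq_iff diag_mat_matrix_mult walk_def
        less_imp_neq[symmetric] divide_inverse mult.commute)
qed

lemma energy_walk_le: "energy (\<lambda>j. \<Sum>l\<in>UNIV. s l * walk $ l $ j) \<le> energy s"
proof -
  have column: "(\<Sum>l\<in>UNIV. s l * walk $ l $ j)\<^sup>2 / degree j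
      \<le> (\<Sum>l\<in>UNIV. W $ l $ j * (s l / degree l)\<^sup>2)" for j
  proof -
    have "(\<Sum>l\<in>UNIV. s l * walk $ l $ j) = (\<Sum>l\<in>UNIV. W $ l $ j * (s l / degree l))"
      by (simp add: walk_def ac_simps)
    also have "(\<dots>)\<^sup>2 \<le> degree j * (\<Sum>l\<in>UNIV. W $ l $ j * (s l / degree l)\<^sup>2)"
      using weighted_Cauchy_Schwarz_sum[of UNIV "\<lambda>l. W $ l $ j" "\<lambda>l. s l / degree l"]
      by (simp add: nonneg column_sum_eq_degree)
    finally show ?thesis
      using degree_pos[of j] by (simp add: divide_le_eq mult.commute)
  qed
  have "energy (\<lambda>j. \<Sum>l\<in>UNIV. s l * walk $ l $ j)
      \<le> (\<Sum>j\<in>UNIV. \<Sum>l\<in>UNIV. W $ l $ j * (s l / degree l)\<^sup>2)"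
    unfolding energy_def by (rule sum_mono) (rule column)
  also have "\<dots> = (\<Sum>l\<in>UNIV. \<Sum>j\<in>UNIV. W $ l $ j * (s l / degree l)\<^sup>2)"
    by (rule sum.swap)
  also have "\<dots> = (\<Sum>l\<in>UNIV. degree l * (s l / degree l)\<^sup>2)"
    by (simp add: sum_distrib_right[symmetric] degree_def)
  also have "\<dots> = energy s"
    unfolding energy_def using degree_pos
    by (intro sum.cong) (simp_all add: power2_eq_square less_imp_neq[symmetric])
  finally show ?thesis .
qed

lemma energy_col_sum_matpow_le: "energy (col_sum (matpow walk k)) \<le> CARD('n)"
proof (induction k)
  case 0
  have "energy (col_sum (matpow walk 0)) = (\<Sum>l\<in>UNIV. 1 / degree l)"
    by (simp add: energy_def col_sum_mat_1)
  also have "\<dots> \<le> (\<Sum>l\<in>(UNIV::'n set). 1)"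
    by (intro sum_mono) (simp add: degree_ge_1 degree_pos divide_le_eq_1)
  finally show ?case by simp
next
  case (Suc k)
  have "col_sum (matpow walk (Suc k)) = (\<lambda>j. \<Sum>l\<in>UNIV. col_sum (matpow walk k) l * walk $ l $ j)"
    unfolding matpow_Suc_right col_sum_matrix_mult ..
  then show ?case
    using energy_walk_le[of "col_sum (matpow walk k)"] Suc by simp
qed

lemma col_sum_walk_ge: "col_sum walk j \<ge> 1 / CARD('n)"
proof -
  obtain l where "W $ j $ l \<noteq> 0" using no_isolated by blast
  then have "W $ l $ j = 1" using zero_one[of j l] symmetric[of j l] by auto
  then have "1 / CARD('n) \<le> walk $ l $ j"
    using degree_le_card[of l] degree_pos[of l] by (simp add: walk_def frac_le)
  also have "\<dots> \<le> col_sum walk j"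
    unfolding col_sum_def by (rule member_le_sum) (simp_all add: walk_nonneg)
  finally show ?thesis .
qed

lemma col_sum_matpow_square_le: "(col_sum (matpow walk k) j)\<^sup>2 \<le> CARD('n) * col_sum walk j"
proof (cases k)
  case 0
  then show ?thesis
    using col_sum_walk_ge[of j] by (simp add: col_sum_mat_1 field_simps)
next
  case (Suc k')
  let ?c = "col_sum (matpow walk k')"
  have "walk $ l $ j * (?c l)\<^sup>2 \<le> (?c l)\<^sup>2 / degree l" for l
    unfolding walk_def using le_one[of l j] nonneg[of l j] degree_pos[of l]
    by (simp add: divide_right_mono mult_left_le_one_le)
  then have "(\<Sum>l\<in>UNIV. walk $ l $ j * (?c l)\<^sup>2) \<le> energy ?c"
    unfolding energy_def by (rule sum_mono)
  also have "\<dots> \<le> CARD('n)"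
    by (rule energy_col_sum_matpow_le)
  finally have energy_bound: "(\<Sum>l\<in>UNIV. walk $ l $ j * (?c l)\<^sup>2) \<le> CARD('n)" .
  have "(col_sum (matpow walk k) j)\<^sup>2 = (\<Sum>l\<in>UNIV. walk $ l $ j * ?c l)\<^sup>2"
    unfolding Suc matpow_Suc_right col_sum_matrix_mult by (simp add: mult.commute)
  also have "\<dots> \<le> col_sum walk j * (\<Sum>l\<in>UNIV. walk $ l $ j * (?c l)\<^sup>2)"
    unfolding col_sum_def by (rule weighted_Cauchy_Schwarz_sum) (rule walk_nonneg)
  also have "\<dots> \<le> col_sum walk j * CARD('n)"
    using energy_bound by (rule mult_left_mono) (simp add: col_sum_def sum_nonneg walk_nonneg)
  finally show ?thesis
    by (simp add: mult.commute)
qed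

lemma norm1_matpow_walk_le: "norm1 (matpow walk k) \<le> sqrt (CARD('n) * norm1 walk)"
proof (rule norm1_le_of_col_sum_le)
  show "matpow walk k $ i $ j \<ge> 0" for i j
    by (rule matpow_nonneg) (rule walk_nonneg)
  fix j
  have "col_sum (matpow walk k) j \<le> sqrt (CARD('n) * col_sum walk j)"
    using col_sum_matpow_square_le by (simp add: real_le_rsqrt)
  also have "\<dots> \<le> sqrt (CARD('n) * norm1 walk)"
    by (simp add: col_sum_le_norm1 walk_nonneg)
  finally show "col_sum (matpow walk k) j \<le> sqrt (CARD('n) * norm1 walk)" .
qed

end

theorem lemma7:
  fixes P :: "real^'n^'n" and k :: nat
  assumes "equal_neighbor P"
  shows "norm1 ((1 / real CARD('n)) *\<^sub>R matpow P k)
           \<le> 2 * sqrt (norm1 ((1 / real CARD('n)) *\<^sub>R P))"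
proof -
  obtain W :: "real^'n^'n" where W: "adjacency_matrix W"
    and P: "P = matrix_inv (diag_mat (W *v (\<chi> i. 1))) ** W"
    using assms unfolding equal_neighbor_def adjacency_matrix_def
    by (metis transpose_def vec_lambda_beta)
  interpret adjacency_matrix W by (fact W)
  define n where "n = real CARD('n)"
  have "P = walk" using P diag_degree_inv_mult_eq_walk by simp
  then have "norm1 ((1 / n) *\<^sub>R matpow P k) \<le> (1 / n) * sqrt (n * norm1 P)"
    using norm1_matpow_walk_le[of k] by (simp add: norm1_scaleR n_def divide_right_mono)
  also have "\<dots> = sqrt (norm1 ((1 / n) *\<^sub>R P))"
    by (simp add: norm1_scaleR n_def real_sqrt_mult real_sqrt_divide field_simps)
  also have "\<dots> \<le> 2 * sqrt (norm1 ((1 / n) *\<^sub>R P))"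
    using norm1_nonneg by simp
  finally show ?thesis unfolding n_def .
qed

end
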